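(* Let $(\Omega,\mathcal{F},P)$ be a probability space with filtration $\{\mathcal{F}_t\}_{0\le t\le T}$. Let $(\delta_{st})_{0\le s\le t\le T}$ be nonnegative real numbers such that $\delta_{rs}\delta_{st}+\delta_{rs}+\delta_{st}=\delta_{rt}$ for all $r\le s\le t$. For $s\le t$ define \[\mathcal{Q}_{st}=\Big\{Q\ll P \text{ on } \mathcal{F}_t:\ Q|_{\mathcal{F}_s}=P,\ \frac{dQ}{dP}=1+g_{st}\text{ for some } g_{st}\in L^2(\mathcal{F}_t)\text{ with } E[g_{st}^2\mid\mathcal{F}_s]\le\delta_{st}^2\Big\}.\] Then: (1) for all $r\le s\le t$, $Q\in\mathcal{Q}_{rs}$ and $R\in\mathcal{Q}_{st}$, the probability measure $S\ll P$ with $\frac{dS}{dP}=\frac{dQ}{dP}\frac{dR}{dP}$ belongs to $\mathcal{Q}_{rt}$; (2) for all $A\in\mathcal{F}_s$ and $Q_1,Q_2\in\mathcal{Q}_{st}$, there exists $Q\in\mathcal{Q}_{st}$ with $\frac{dQ}{dP}=\frac{dQ_1}{dP}1_A+\frac{dQ_2}{dP}1_{A^c}$. *)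

theory Defs
  imports "HOL-Probability.Probability"
begin

definition Qcls ::
  "'a measure \<Rightarrow> (real \<Rightarrow> 'a measure) \<Rightarrow> (real \<Rightarrow> real \<Rightarrow> real) \<Rightarrow> real \<Rightarrow> real \<Rightarrow> 'a measure set"
where
  "Qcls M F \<delta> s t =
    {Q. prob_space Q \<and> sets Q = sets (F t) \<and>
        absolutely_continuous (restr_to_subalg M (F t)) Q \<and>
        (\<forall>A\<in>sets (F s). emeasure Q A = emeasure M A) \<and>
        (\<exists>g. g \<in> borel_measurable (F t) \<and>
             integrable M (\<lambda>x. (g x)\<^sup>2) \<and>
             (AE x in M. 0 \<le> 1 + g x) \<and>
             Q = density (restr_to_subalg M (F t)) (\<lambda>x. ennreal (1 + g x)) \<and>
             (AE x in M. real_cond_exp M (F s) (\<lambda>x. (g x)\<^sup>2) x \<le> (\<delta> s t)\<^sup>2))}"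

end

theory Submission
  imports Defs
begin

text \<open>A measure in Q_st has density 1 + g with E[g|F_s] = 0 and E[g^2|F_s] \<le> \<delta>_st^2.
  For (1), the product density is (1 + g)(1 + h) = 1 + k with k = g + h + g h, where g is
  F_s-measurable and E[h|F_s] = 0. Conditioning on F_s gives E[k|F_s] = g and
  E[k^2|F_s] = g^2 + (1 + g)^2 E[h^2|F_s] \<le> (1 + \<delta>_st^2) g^2 + 2 \<delta>_st^2 g + \<delta>_st^2;
  conditioning further on F_r yields E[k|F_r] = 0 and
  E[k^2|F_r] \<le> (1 + \<delta>_st^2) \<delta>_rs^2 + \<delta>_st^2 \<le> \<delta>_rt^2, the last step by the composition rule
  for \<delta>. Square integrability of g h comes from E[g^2 h^2] = E[g^2 E[h^2|F_s]] \<le> \<delta>_st^2 E[g^2].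
  For (2), pasting g_1 on A and g_2 off A commutes with conditioning on F_s since A \<in> F_s.\<close>

lemma power2_sum3_le:
  fixes a b c :: real
  shows "(a + b + c)\<^sup>2 \<le> 3 * (a\<^sup>2 + b\<^sup>2 + c\<^sup>2)"
proof -
  have "3 * (a\<^sup>2 + b\<^sup>2 + c\<^sup>2) - (a + b + c)\<^sup>2 = (a - b)\<^sup>2 + (b - c)\<^sup>2 + (a - c)\<^sup>2"
    by (simp add: power2_eq_square algebra_simps)
  moreover have "0 \<le> (a - b)\<^sup>2 + (b - c)\<^sup>2 + (a - c)\<^sup>2" by simp
  ultimately show ?thesis by linarith
qed

lemma product_sum_sq_bound:
  fixes x y :: real
  assumes "0 \<le> x" "0 \<le> y"
  shows "(1 + y\<^sup>2) * x\<^sup>2 + y\<^sup>2 \<le> (x * y + x + y)\<^sup>2"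
proof -
  have expand: "(x * y + x + y)\<^sup>2 = (1 + y\<^sup>2) * x\<^sup>2 + y\<^sup>2 + 2 * (x * x * y + x * y * y + x * y)"
    by (simp add: power2_eq_square algebra_simps)
  have "0 \<le> x * x * y + x * y * y + x * y" using assms by simp
  then show ?thesis unfolding expand by simp
qed

lemma square_integrable_mult:
  fixes f g :: "'a \<Rightarrow> real"
  assumes [measurable]: "f \<in> borel_measurable M" "g \<in> borel_measurable M"
    and "integrable M (\<lambda>x. (f x)\<^sup>2)" "integrable M (\<lambda>x. (g x)\<^sup>2)"
  shows "integrable M (\<lambda>x. f x * g x)"
proof (rule Bochner_Integration.integrable_bound)
  show "integrable M (\<lambda>x. (f x)\<^sup>2 + (g x)\<^sup>2)" using assms by auto
  show "AE x in M. norm (f x * g x) \<le> norm ((f x)\<^sup>2 + (g x)\<^sup>2)"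
  proof (intro AE_I2)
    fix x
    have "2 * \<bar>f x\<bar> * \<bar>g x\<bar> \<le> (f x)\<^sup>2 + (g x)\<^sup>2"
      using sum_squares_bound[of "\<bar>f x\<bar>" "\<bar>g x\<bar>"] by (simp add: power2_abs)
    moreover have "0 \<le> \<bar>f x\<bar> * \<bar>g x\<bar>" by simp
    ultimately have "\<bar>f x\<bar> * \<bar>g x\<bar> \<le> (f x)\<^sup>2 + (g x)\<^sup>2" by linarith
    then show "norm (f x * g x) \<le> norm ((f x)\<^sup>2 + (g x)\<^sup>2)"
      by (simp add: abs_mult)
  qed
qed simp

lemma square_integrable_product_perturbation:
  fixes g h :: "'a \<Rightarrow> real"
  assumes [measurable]: "g \<in> borel_measurable M" "h \<in> borel_measurable M"
    and "integrable M (\<lambda>x. (g x)\<^sup>2)" "integrable M (\<lambda>x. (h x)\<^sup>2)"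
    and "integrable M (\<lambda>x. (g x)\<^sup>2 * (h x)\<^sup>2)"
  shows "integrable M (\<lambda>x. (g x + h x + g x * h x)\<^sup>2)"
proof (rule Bochner_Integration.integrable_bound)
  show "integrable M (\<lambda>x. 3 * ((g x)\<^sup>2 + (h x)\<^sup>2 + (g x)\<^sup>2 * (h x)\<^sup>2))"
    using assms by auto
  show "AE x in M. norm ((g x + h x + g x * h x)\<^sup>2) \<le> norm (3 * ((g x)\<^sup>2 + (h x)\<^sup>2 + (g x)\<^sup>2 * (h x)\<^sup>2))"
    using power2_sum3_le[of "g _" "h _" "g _ * h _"] by (simp add: power_mult_distrib)
qed simp

lemma square_integrable_product_terms:
  fixes g h :: "'a \<Rightarrow> real"
  assumes [measurable]: "g \<in> borel_measurable M" "h \<in> borel_measurable M"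
    and g2: "integrable M (\<lambda>x. (g x)\<^sup>2)" and h2: "integrable M (\<lambda>x. (h x)\<^sup>2)"
    and gh: "integrable M (\<lambda>x. (g x)\<^sup>2 * (h x)\<^sup>2)"
  shows "integrable M (\<lambda>x. g x * h x)" "integrable M (\<lambda>x. (g x)\<^sup>2 * h x)"
    "integrable M (\<lambda>x. g x * (h x)\<^sup>2)"
proof -
  have gh2: "integrable M (\<lambda>x. (g x * h x)\<^sup>2)" using gh by (simp add: power_mult_distrib)
  show "integrable M (\<lambda>x. g x * h x)"
    using square_integrable_mult[of g M h] g2 h2 by simp
  show "integrable M (\<lambda>x. (g x)\<^sup>2 * h x)"
    using square_integrable_mult[of g M "\<lambda>x. g x * h x"] g2 gh2 by (simp add: power2_eq_square ac_simps)
  show "integrable M (\<lambda>x. g x * (h x)\<^sup>2)"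
    using square_integrable_mult[of "\<lambda>x. g x * h x" M h] h2 gh2 by (simp add: power2_eq_square ac_simps)
qed

lemma subalgebra_mono:
  assumes "subalgebra M Fs" "subalgebra M Ft" "sets Fs \<subseteq> sets Ft"
  shows "subalgebra Ft Fs"
  using assms by (auto simp: subalgebra_def)

lemma measurable_restr_to_subalg_mono:
  assumes "subalgebra M Fs" "subalgebra M Ft" "sets Fs \<subseteq> sets Ft"
    and "f \<in> measurable (restr_to_subalg M Fs) N"
  shows "f \<in> measurable (restr_to_subalg M Ft) N"
  using assms by (auto simp: measurable_def sets_restr_to_subalg space_restr_to_subalg)

lemma AE_restr_to_subalg_mono:
  assumes "subalgebra M Fs" "subalgebra M Ft" "sets Fs \<subseteq> sets Ft"
    and "AE x in restr_to_subalg M Fs. P x"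
  shows "AE x in restr_to_subalg M Ft. P x"
proof -
  obtain N where N: "\<And>x. x \<in> space M - N \<Longrightarrow> P x" "N \<in> null_sets (restr_to_subalg M Fs)"
    using AE_E3[OF assms(4)] by (auto simp: space_restr_to_subalg)
  have "N \<in> null_sets (restr_to_subalg M Ft)"
    using N(2) assms(3)
    by (auto simp: null_sets_restr_to_subalg[OF assms(1)] null_sets_restr_to_subalg[OF assms(2)])
  with N(1) show ?thesis by (intro AE_I'[of N]) (auto simp: space_restr_to_subalg)
qed

context prob_space
begin

lemma RN_deriv_density_restr_to_subalg:
  assumes "subalgebra M F" "f \<in> borel_measurable F"
  shows "AE x in restr_to_subalg M F.
           RN_deriv (restr_to_subalg M F) (density (restr_to_subalg M F) f) x = f x"
proof -
  interpret MF: prob_space "restr_to_subalg M F"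
    using prob_space_restr_to_subalg[OF assms(1) prob_space_axioms] .
  have "AE x in restr_to_subalg M F.
          f x = RN_deriv (restr_to_subalg M F) (density (restr_to_subalg M F) f) x"
    using assms by (intro MF.RN_deriv_unique measurable_in_subalg) auto
  then show ?thesis by auto
qed

lemma density_RN_deriv_mult:
  fixes g h :: "'a \<Rightarrow> real"
  assumes s: "subalgebra M Fs" and t: "subalgebra M Ft" and st: "sets Fs \<subseteq> sets Ft"
    and gs [measurable]: "g \<in> borel_measurable Fs" and g_nonneg: "AE x in M. 0 \<le> 1 + g x"
    and [measurable]: "h \<in> borel_measurable Ft" and h_nonneg: "AE x in M. 0 \<le> 1 + h x"
  shows "density (restr_to_subalg M Ft)
           (\<lambda>x. RN_deriv (restr_to_subalg M Fs) (density (restr_to_subalg M Fs) (\<lambda>x. ennreal (1 + g x))) x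
              * RN_deriv (restr_to_subalg M Ft) (density (restr_to_subalg M Ft) (\<lambda>x. ennreal (1 + h x))) x)
         = density (restr_to_subalg M Ft) (\<lambda>x. ennreal (1 + (g x + h x + g x * h x)))"
proof (rule density_cong)
  have [measurable]: "g \<in> borel_measurable Ft"
    using measurable_from_subalg[OF subalgebra_mono[OF s t st] gs] .
  have "RN_deriv (restr_to_subalg M Fs) (density (restr_to_subalg M Fs) (\<lambda>x. ennreal (1 + g x)))
          \<in> borel_measurable (restr_to_subalg M Ft)"
    by (rule measurable_restr_to_subalg_mono[OF s t st]) simp
  then show "(\<lambda>x. RN_deriv (restr_to_subalg M Fs) (density (restr_to_subalg M Fs) (\<lambda>x. ennreal (1 + g x))) x
              * RN_deriv (restr_to_subalg M Ft) (density (restr_to_subalg M Ft) (\<lambda>x. ennreal (1 + h x))) x)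
          \<in> borel_measurable (restr_to_subalg M Ft)"
    by measurable
  show "(\<lambda>x. ennreal (1 + (g x + h x + g x * h x))) \<in> borel_measurable (restr_to_subalg M Ft)"
    by (intro measurable_in_subalg[OF t]) measurable
  have "AE x in restr_to_subalg M Ft.
          RN_deriv (restr_to_subalg M Fs) (density (restr_to_subalg M Fs) (\<lambda>x. ennreal (1 + g x))) x
            = ennreal (1 + g x)"
    by (rule AE_restr_to_subalg_mono[OF s t st RN_deriv_density_restr_to_subalg[OF s]]) measurable
  moreover have "AE x in restr_to_subalg M Ft.
          RN_deriv (restr_to_subalg M Ft) (density (restr_to_subalg M Ft) (\<lambda>x. ennreal (1 + h x))) x
            = ennreal (1 + h x)"
    by (rule RN_deriv_density_restr_to_subalg[OF t]) measurable
  moreover have "AE x in restr_to_subalg M Ft. 0 \<le> 1 + g x" "AE x in restr_to_subalg M Ft. 0 \<le> 1 + h x"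
    by (rule AE_restr_to_subalg2[OF t g_nonneg], measurable, rule AE_restr_to_subalg2[OF t h_nonneg], measurable)
  ultimately show "AE x in restr_to_subalg M Ft.
          RN_deriv (restr_to_subalg M Fs) (density (restr_to_subalg M Fs) (\<lambda>x. ennreal (1 + g x))) x
            * RN_deriv (restr_to_subalg M Ft) (density (restr_to_subalg M Ft) (\<lambda>x. ennreal (1 + h x))) x
          = ennreal (1 + (g x + h x + g x * h x))"
  proof eventually_elim
    case (elim x)
    then have "ennreal (1 + (g x + h x + g x * h x)) = ennreal (1 + g x) * ennreal (1 + h x)"
      by (simp add: ennreal_mult[symmetric] algebra_simps)
    with elim show ?case by simp
  qed
qed

lemma density_RN_deriv_paste:
  fixes g1 g2 :: "'a \<Rightarrow> real"
  assumes t: "subalgebra M Ft" and A: "A \<in> sets Ft"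
    and [measurable]: "g1 \<in> borel_measurable Ft" "g2 \<in> borel_measurable Ft"
  shows "density (restr_to_subalg M Ft)
           (\<lambda>x. RN_deriv (restr_to_subalg M Ft) (density (restr_to_subalg M Ft) (\<lambda>x. ennreal (1 + g1 x))) x
                  * indicator A x
              + RN_deriv (restr_to_subalg M Ft) (density (restr_to_subalg M Ft) (\<lambda>x. ennreal (1 + g2 x))) x
                  * indicator (space M - A) x)
         = density (restr_to_subalg M Ft)
             (\<lambda>x. ennreal (1 + (indicator A x * g1 x + indicator (space M - A) x * g2 x)))"
proof (rule density_cong)
  have "space Ft = space M" using t by (simp add: subalgebra_def)
  then have [measurable]: "A \<in> sets Ft" "space M - A \<in> sets Ft"
    using A by (auto dest: sets.compl_sets)
  then have [measurable]: "A \<in> sets (restr_to_subalg M Ft)" "space M - A \<in> sets (restr_to_subalg M Ft)"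
    by (simp_all add: sets_restr_to_subalg[OF t])
  show "(\<lambda>x. RN_deriv (restr_to_subalg M Ft) (density (restr_to_subalg M Ft) (\<lambda>x. ennreal (1 + g1 x))) x
                  * indicator A x
              + RN_deriv (restr_to_subalg M Ft) (density (restr_to_subalg M Ft) (\<lambda>x. ennreal (1 + g2 x))) x
                  * indicator (space M - A) x)
          \<in> borel_measurable (restr_to_subalg M Ft)"
    by measurable
  show "(\<lambda>x. ennreal (1 + (indicator A x * g1 x + indicator (space M - A) x * g2 x)))
          \<in> borel_measurable (restr_to_subalg M Ft)"
    by (intro measurable_in_subalg[OF t]) measurable
  have "AE x in restr_to_subalg M Ft.
          RN_deriv (restr_to_subalg M Ft) (density (restr_to_subalg M Ft) (\<lambda>x. ennreal (1 + g1 x))) x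
            = ennreal (1 + g1 x)"
    "AE x in restr_to_subalg M Ft.
          RN_deriv (restr_to_subalg M Ft) (density (restr_to_subalg M Ft) (\<lambda>x. ennreal (1 + g2 x))) x
            = ennreal (1 + g2 x)"
    by (rule RN_deriv_density_restr_to_subalg[OF t], measurable)+
  with AE_space show "AE x in restr_to_subalg M Ft.
          RN_deriv (restr_to_subalg M Ft) (density (restr_to_subalg M Ft) (\<lambda>x. ennreal (1 + g1 x))) x
              * indicator A x
            + RN_deriv (restr_to_subalg M Ft) (density (restr_to_subalg M Ft) (\<lambda>x. ennreal (1 + g2 x))) x
              * indicator (space M - A) x
          = ennreal (1 + (indicator A x * g1 x + indicator (space M - A) x * g2 x))"
    by eventually_elim (auto simp: indicator_def space_restr_to_subalg)
qed

lemma emeasure_density_one_plus: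
  fixes g :: "'a \<Rightarrow> real"
  assumes Ft: "subalgebra M Ft"
    and g: "g \<in> borel_measurable Ft" "integrable M g" "AE x in M. 0 \<le> 1 + g x"
    and A: "A \<in> sets Ft"
  shows "emeasure (density (restr_to_subalg M Ft) (\<lambda>x. ennreal (1 + g x))) A
           = ennreal (measure M A + (\<integral>x. indicator A x * g x \<partial>M))"
    and "0 \<le> measure M A + (\<integral>x. indicator A x * g x \<partial>M)"
proof -
  have AM [measurable]: "A \<in> sets M" using A Ft by (auto simp: subalgebra_def)
  have [measurable]: "g \<in> borel_measurable M" using measurable_from_subalg[OF Ft g(1)] .
  have int_eq: "(\<integral>x. (1 + g x) * indicator A x \<partial>M) = measure M A + (\<integral>x. indicator A x * g x \<partial>M)"
  proof -
    have "(\<integral>x. (1 + g x) * indicator A x \<partial>M) = (\<integral>x. indicator A x + indicator A x * g x \<partial>M)"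
      by (intro Bochner_Integration.integral_cong) (auto simp: algebra_simps)
    also have "\<dots> = measure M A + (\<integral>x. indicator A x * g x \<partial>M)"
      using integrable_mult_indicator[OF AM g(2)] by (simp add: emeasure_eq_measure)
    finally show ?thesis .
  qed
  have "emeasure (density (restr_to_subalg M Ft) (\<lambda>x. ennreal (1 + g x))) A
      = (\<integral>\<^sup>+x. ennreal (1 + g x) * indicator A x \<partial>restr_to_subalg M Ft)"
    using A g(1) by (intro emeasure_density measurable_in_subalg[OF Ft])
      (auto simp: sets_restr_to_subalg[OF Ft])
  also have "\<dots> = (\<integral>\<^sup>+x. ennreal ((1 + g x) * indicator A x) \<partial>M)"
    using g(1) A by (subst nn_integral_subalgebra2[OF Ft])
      (auto intro!: nn_integral_cong simp: indicator_def)
  also have "\<dots> = ennreal (\<integral>x. (1 + g x) * indicator A x \<partial>M)"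
    using g(3) integrable_mult_indicator[OF AM, of "\<lambda>x. 1 + g x"] g(2)
    by (intro nn_integral_eq_integral) (auto simp: mult.commute indicator_def)
  finally show "emeasure (density (restr_to_subalg M Ft) (\<lambda>x. ennreal (1 + g x))) A
           = ennreal (measure M A + (\<integral>x. indicator A x * g x \<partial>M))"
    by (simp add: int_eq)
  have "0 \<le> (\<integral>x. (1 + g x) * indicator A x \<partial>M)"
    using g(3) by (intro integral_nonneg_AE) (auto simp: indicator_def)
  then show "0 \<le> measure M A + (\<integral>x. indicator A x * g x \<partial>M)" by (simp add: int_eq)
qed

lemma density_agrees_iff_real_cond_exp_zero:
  fixes g :: "'a \<Rightarrow> real"
  assumes Fs: "subalgebra M Fs" and Ft: "subalgebra M Ft" and st: "sets Fs \<subseteq> sets Ft"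
    and g: "g \<in> borel_measurable Ft" "integrable M g" "AE x in M. 0 \<le> 1 + g x"
  shows "(\<forall>A\<in>sets Fs. emeasure (density (restr_to_subalg M Ft) (\<lambda>x. ennreal (1 + g x))) A
                        = emeasure M A)
         \<longleftrightarrow> (AE x in M. real_cond_exp M Fs g x = 0)"
proof -
  interpret S: finite_measure_subalgebra M Fs by unfold_locales (fact Fs)
  have [measurable]: "g \<in> borel_measurable M" using measurable_from_subalg[OF Ft g(1)] .
  have agrees_iff: "emeasure (density (restr_to_subalg M Ft) (\<lambda>x. ennreal (1 + g x))) A = emeasure M A
      \<longleftrightarrow> (\<integral>x. indicator A x * g x \<partial>M) = 0" if A: "A \<in> sets Fs" for A
    using emeasure_density_one_plus[OF Ft g, of A] A st
    by (auto simp: emeasure_eq_measure ennreal_inj)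
  have "(\<forall>A\<in>sets Fs. (\<integral>x. indicator A x * g x \<partial>M) = 0) \<longleftrightarrow> (AE x in M. real_cond_exp M Fs g x = 0)"
  proof
    assume "\<forall>A\<in>sets Fs. (\<integral>x. indicator A x * g x \<partial>M) = 0"
    then show "AE x in M. real_cond_exp M Fs g x = 0"
      using g(2) by (intro S.real_cond_exp_charact) (auto simp: set_lebesgue_integral_def)
  next
    assume zero: "AE x in M. real_cond_exp M Fs g x = 0"
    show "\<forall>A\<in>sets Fs. (\<integral>x. indicator A x * g x \<partial>M) = 0"
    proof
      fix A assume A [measurable]: "A \<in> sets Fs"
      have [measurable]: "A \<in> sets M" using A Fs by (auto simp: subalgebra_def)
      have "(\<integral>x. indicator A x * g x \<partial>M) = (\<integral>x. indicator A x * real_cond_exp M Fs g x \<partial>M)"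
        using integrable_mult_indicator[of A M g] g(2)
        by (intro S.real_cond_exp_intg(2)[symmetric]) auto
      also have "\<dots> = 0"
        using zero by (subst integral_cong_AE[where g = "\<lambda>_. 0"]) auto
      finally show "(\<integral>x. indicator A x * g x \<partial>M) = 0" .
    qed
  qed
  then show ?thesis by (simp add: agrees_iff)
qed

end

context sigma_finite_subalgebra
begin

lemma nn_cond_exp_le_of_real_cond_exp_le:
  fixes v :: "'a \<Rightarrow> real"
  assumes v [measurable]: "v \<in> borel_measurable M" "\<And>x. 0 \<le> v x" "integrable M v"
    and le: "AE x in M. real_cond_exp M F v x \<le> c"
  shows "AE x in M. nn_cond_exp M F (\<lambda>x. ennreal (v x)) x \<le> ennreal c"
proof -
  have "(\<integral>\<^sup>+x. nn_cond_exp M F (\<lambda>x. ennreal (v x)) x \<partial>M) = (\<integral>\<^sup>+x. ennreal (v x) \<partial>M)"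
    using nn_cond_exp_intg[of "\<lambda>_. 1" "\<lambda>x. ennreal (v x)"] by simp
  also have "\<dots> < \<infinity>" using v by (simp add: integrable_iff_bounded)
  finally have "AE x in M. nn_cond_exp M F (\<lambda>x. ennreal (v x)) x \<noteq> \<infinity>"
    by (intro nn_integral_PInf_AE) auto
  moreover have "AE x in M. nn_cond_exp M F (\<lambda>x. 0) x = 0"
    using nn_cond_exp_F_meas[of "\<lambda>x. 0"] by auto
  ultimately show ?thesis
    using le
  proof eventually_elim
    case (elim x)
    have "(\<lambda>x. ennreal (- v x)) = (\<lambda>x. 0)" using v(2) by (auto simp: ennreal_eq_0_iff)
    then have "real_cond_exp M F v x = enn2real (nn_cond_exp M F (\<lambda>x. ennreal (v x)) x)"
      using elim by (simp add: real_cond_exp_def)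
    have "nn_cond_exp M F (\<lambda>x. ennreal (v x)) x
            = ennreal (enn2real (nn_cond_exp M F (\<lambda>x. ennreal (v x)) x))"
      using elim by (simp add: less_top)
    also have "\<dots> \<le> ennreal c"
      using elim \<open>real_cond_exp M F v x = _\<close> by (intro ennreal_leI) simp
    finally show ?case .
  qed
qed

lemma integrable_mult_real_cond_exp_bounded:
  fixes u v :: "'a \<Rightarrow> real"
  assumes u [measurable]: "u \<in> borel_measurable F" "\<And>x. 0 \<le> u x" "integrable M u"
    and v [measurable]: "v \<in> borel_measurable M" "\<And>x. 0 \<le> v x" "integrable M v"
    and le: "AE x in M. real_cond_exp M F v x \<le> c"
  shows "integrable M (\<lambda>x. u x * v x)"
proof -
  have [measurable]: "u \<in> borel_measurable M" using measurable_from_subalg[OF subalg u(1)] .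
  have "(\<integral>\<^sup>+x. ennreal (u x * v x) \<partial>M) = (\<integral>\<^sup>+x. ennreal (u x) * ennreal (v x) \<partial>M)"
    by (intro nn_integral_cong ennreal_mult u(2) v(2))
  also have "\<dots> = (\<integral>\<^sup>+x. ennreal (u x) * nn_cond_exp M F (\<lambda>x. ennreal (v x)) x \<partial>M)"
    by (rule nn_cond_exp_intg[symmetric]) auto
  also have "\<dots> \<le> (\<integral>\<^sup>+x. ennreal (u x) * ennreal c \<partial>M)"
    using nn_cond_exp_le_of_real_cond_exp_le[OF v le]
    by (intro nn_integral_mono_AE) (auto elim!: eventually_mono simp: mult_left_mono)
  also have "\<dots> = (\<integral>\<^sup>+x. ennreal (u x) \<partial>M) * ennreal c"
    by (simp add: nn_integral_multc)
  also have "\<dots> < \<infinity>"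
    using u by (simp add: integrable_iff_bounded ennreal_mult_less_top)
  finally show ?thesis
    by (intro integrableI_nonneg) (auto simp: u(2) v(2))
qed

lemma real_cond_exp_paste:
  fixes f g :: "'a \<Rightarrow> real"
  assumes A: "A \<in> sets F" and f: "integrable M f" and g: "integrable M g"
  shows "AE x in M. real_cond_exp M F (\<lambda>x. indicator A x * f x + indicator (space M - A) x * g x) x
           = indicator A x * real_cond_exp M F f x + indicator (space M - A) x * real_cond_exp M F g x"
proof -
  have "space F = space M" using subalg by (simp add: subalgebra_def)
  then have [measurable]: "A \<in> sets F" "space M - A \<in> sets F"
    using A by (metis sets.compl_sets)+
  have [measurable]: "A \<in> sets M" "space M - A \<in> sets M"
    using A subalg by (auto simp: subalgebra_def)
  have fA: "integrable M (\<lambda>x. indicator A x * f x)"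
    using integrable_mult_indicator[of A M f] f by simp
  have gA: "integrable M (\<lambda>x. indicator (space M - A) x * g x)"
    using integrable_mult_indicator[of "space M - A" M g] g by simp
  have "AE x in M. real_cond_exp M F (\<lambda>x. indicator A x * f x) x = indicator A x * real_cond_exp M F f x"
    using fA f by (intro real_cond_exp_mult) auto
  moreover have "AE x in M. real_cond_exp M F (\<lambda>x. indicator (space M - A) x * g x) x
                   = indicator (space M - A) x * real_cond_exp M F g x"
    using gA g by (intro real_cond_exp_mult) auto
  ultimately show ?thesis
    using real_cond_exp_add[OF fA gA] by eventually_elim simp
qed

lemma real_cond_exp_product_perturbation:
  fixes g h :: "'a \<Rightarrow> real"
  assumes g [measurable]: "g \<in> borel_measurable F" "integrable M g" "integrable M (\<lambda>x. (g x)\<^sup>2)"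
    and h [measurable]: "h \<in> borel_measurable M" "integrable M h" "integrable M (\<lambda>x. (h x)\<^sup>2)"
    and h_centred: "AE x in M. real_cond_exp M F h x = 0"
    and gh: "integrable M (\<lambda>x. (g x)\<^sup>2 * (h x)\<^sup>2)"
  shows "AE x in M. real_cond_exp M F (\<lambda>x. g x + h x + g x * h x) x = g x"
    and "AE x in M. real_cond_exp M F (\<lambda>x. (g x + h x + g x * h x)\<^sup>2) x
           = (g x)\<^sup>2 + (1 + g x)\<^sup>2 * real_cond_exp M F (\<lambda>x. (h x)\<^sup>2) x"
proof -
  have gM [measurable]: "g \<in> borel_measurable M" using measurable_from_subalg[OF subalg g(1)] .
  have g2_meas: "(\<lambda>x. (g x)\<^sup>2) \<in> borel_measurable F" by measurable
  note terms = square_integrable_product_terms[OF gM h(1) g(3) h(3) gh]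
  have i_gh: "integrable M (\<lambda>x. g x * h x)" using terms by simp
  have "(\<lambda>x. (2 * g x * (1 + g x)) * h x) = (\<lambda>x. 2 * (g x * h x) + 2 * ((g x)\<^sup>2 * h x))"
    by (simp add: power2_eq_square algebra_simps)
  then have i_Bh: "integrable M (\<lambda>x. (2 * g x * (1 + g x)) * h x)" using terms by simp
  have "(\<lambda>x. (1 + g x)\<^sup>2 * (h x)\<^sup>2) = (\<lambda>x. (h x)\<^sup>2 + 2 * (g x * (h x)\<^sup>2) + (g x)\<^sup>2 * (h x)\<^sup>2)"
    by (simp add: power2_eq_square algebra_simps)
  then have i_Ch: "integrable M (\<lambda>x. (1 + g x)\<^sup>2 * (h x)\<^sup>2)" using terms h(3) gh by simp
  have "AE x in M. real_cond_exp M F (\<lambda>x. g x * h x) x = g x * real_cond_exp M F h x"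
    using i_gh by (intro real_cond_exp_mult) auto
  then show "AE x in M. real_cond_exp M F (\<lambda>x. g x + h x + g x * h x) x = g x"
    using real_cond_exp_add[OF Bochner_Integration.integrable_add[OF g(2) h(2)] i_gh] real_cond_exp_add[OF g(2) h(2)]
      real_cond_exp_F_meas[OF g(2) g(1)] h_centred
    by eventually_elim auto
  have expand: "(\<lambda>x. (g x + h x + g x * h x)\<^sup>2)
      = (\<lambda>x. ((g x)\<^sup>2 + (2 * g x * (1 + g x)) * h x) + (1 + g x)\<^sup>2 * (h x)\<^sup>2)"
    by (auto simp: power2_eq_square algebra_simps)
  have "AE x in M. real_cond_exp M F (\<lambda>x. (2 * g x * (1 + g x)) * h x) x
          = (2 * g x * (1 + g x)) * real_cond_exp M F h x"
    using i_Bh by (intro real_cond_exp_mult) auto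
  moreover have "AE x in M. real_cond_exp M F (\<lambda>x. (1 + g x)\<^sup>2 * (h x)\<^sup>2) x
          = (1 + g x)\<^sup>2 * real_cond_exp M F (\<lambda>x. (h x)\<^sup>2) x"
    using i_Ch by (intro real_cond_exp_mult) auto
  ultimately show "AE x in M. real_cond_exp M F (\<lambda>x. (g x + h x + g x * h x)\<^sup>2) x
           = (g x)\<^sup>2 + (1 + g x)\<^sup>2 * real_cond_exp M F (\<lambda>x. (h x)\<^sup>2) x"
    unfolding expand
    using real_cond_exp_add[OF Bochner_Integration.integrable_add[OF g(3) i_Bh] i_Ch] real_cond_exp_add[OF g(3) i_Bh]
      real_cond_exp_F_meas[OF g(3) g2_meas] h_centred
    by eventually_elim auto
qed

end

lemma (in finite_measure_subalgebra) real_cond_exp_quadratic: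
  fixes g :: "'a \<Rightarrow> real"
  assumes g: "integrable M g" and g2: "integrable M (\<lambda>x. (g x)\<^sup>2)"
  shows "AE x in M. real_cond_exp M F (\<lambda>x. \<alpha> * (g x)\<^sup>2 + \<beta> * g x + \<gamma>) x
           = \<alpha> * real_cond_exp M F (\<lambda>x. (g x)\<^sup>2) x + \<beta> * real_cond_exp M F g x + \<gamma>"
proof -
  have "AE x in M. real_cond_exp M F (\<lambda>x. \<alpha> * (g x)\<^sup>2 + \<beta> * g x + \<gamma>) x
          = real_cond_exp M F (\<lambda>x. \<alpha> * (g x)\<^sup>2 + \<beta> * g x) x + real_cond_exp M F (\<lambda>_. \<gamma>) x"
    using g g2 by (intro real_cond_exp_add) auto
  moreover have "AE x in M. real_cond_exp M F (\<lambda>x. \<alpha> * (g x)\<^sup>2 + \<beta> * g x) x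
          = real_cond_exp M F (\<lambda>x. \<alpha> * (g x)\<^sup>2) x + real_cond_exp M F (\<lambda>x. \<beta> * g x) x"
    using g g2 by (intro real_cond_exp_add) auto
  moreover have "AE x in M. real_cond_exp M F (\<lambda>_. \<gamma>) x = \<gamma>"
    by (intro real_cond_exp_F_meas) auto
  ultimately show ?thesis
    using real_cond_exp_cmult[OF g2, of \<alpha>] real_cond_exp_cmult[OF g, of \<beta>]
    by eventually_elim simp
qed

text \<open>The densities 1 + g of the class Q_st, with c = \<delta>_st^2; agreeing with P on F_s amounts
  to E[g|F_s] = 0 (lemma density_agrees_iff_real_cond_exp_zero).\<close>

definition density_perturbation ::
  "'a measure \<Rightarrow> 'a measure \<Rightarrow> 'a measure \<Rightarrow> real \<Rightarrow> ('a \<Rightarrow> real) \<Rightarrow> bool"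
where
  "density_perturbation M Fs Ft c g \<longleftrightarrow>
     g \<in> borel_measurable Ft \<and> integrable M (\<lambda>x. (g x)\<^sup>2) \<and> (AE x in M. 0 \<le> 1 + g x) \<and>
     (AE x in M. real_cond_exp M Fs g x = 0) \<and>
     (AE x in M. real_cond_exp M Fs (\<lambda>x. (g x)\<^sup>2) x \<le> c)"

lemma density_perturbation_mono:
  assumes "density_perturbation M Fs Ft c g" "c \<le> c'"
  shows "density_perturbation M Fs Ft c' g"
proof -
  have "AE x in M. real_cond_exp M Fs (\<lambda>x. (g x)\<^sup>2) x \<le> c"
    using assms(1) by (simp add: density_perturbation_def)
  then have "AE x in M. real_cond_exp M Fs (\<lambda>x. (g x)\<^sup>2) x \<le> c'"
    by eventually_elim (use assms(2) in simp)
  then show ?thesis using assms(1) by (simp add: density_perturbation_def)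
qed

lemma density_in_Qcls:
  assumes P: "prob_space M" and s: "subalgebra M (F s)" and t: "subalgebra M (F t)"
    and st: "sets (F s) \<subseteq> sets (F t)" and g: "density_perturbation M (F s) (F t) ((\<delta> s t)\<^sup>2) g"
  shows "density (restr_to_subalg M (F t)) (\<lambda>x. ennreal (1 + g x)) \<in> Qcls M F \<delta> s t"
proof -
  interpret prob_space M by fact
  let ?Q = "density (restr_to_subalg M (F t)) (\<lambda>x. ennreal (1 + g x))"
  have g_meas [measurable]: "g \<in> borel_measurable (F t)"
    and g_sq: "integrable M (\<lambda>x. (g x)\<^sup>2)" and g_nonneg: "AE x in M. 0 \<le> 1 + g x"
    and g_centred: "AE x in M. real_cond_exp M (F s) g x = 0"
    and g_var: "AE x in M. real_cond_exp M (F s) (\<lambda>x. (g x)\<^sup>2) x \<le> (\<delta> s t)\<^sup>2"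
    using g by (simp_all add: density_perturbation_def)
  have "integrable M g"
    using square_integrable_imp_integrable[OF measurable_from_subalg[OF t g_meas] g_sq] .
  then have agrees: "\<forall>A\<in>sets (F s). emeasure ?Q A = emeasure M A"
    using density_agrees_iff_real_cond_exp_zero[OF s t st g_meas _ g_nonneg] g_centred by blast
  have "space M \<in> sets (F s)" using s by (metis sets.top subalgebra_def)
  then have "prob_space ?Q"
    using agrees by (intro prob_spaceI) (auto simp: space_restr_to_subalg emeasure_space_1)
  moreover have "absolutely_continuous (restr_to_subalg M (F t)) ?Q"
    by (intro absolutely_continuousI_density measurable_in_subalg[OF t]) measurable
  moreover have "sets ?Q = sets (F t)"
    by (simp add: sets_restr_to_subalg[OF t])
  ultimately show ?thesis
    unfolding Qcls_def using agrees g_meas g_sq g_nonneg g_var by blast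
qed

lemma Qcls_iff:
  assumes P: "prob_space M" and s: "subalgebra M (F s)" and t: "subalgebra M (F t)"
    and st: "sets (F s) \<subseteq> sets (F t)"
  shows "Q \<in> Qcls M F \<delta> s t \<longleftrightarrow>
    (\<exists>g. density_perturbation M (F s) (F t) ((\<delta> s t)\<^sup>2) g \<and>
         Q = density (restr_to_subalg M (F t)) (\<lambda>x. ennreal (1 + g x)))"
proof
  interpret prob_space M by fact
  assume "Q \<in> Qcls M F \<delta> s t"
  then obtain g where g: "g \<in> borel_measurable (F t)" "integrable M (\<lambda>x. (g x)\<^sup>2)"
      "AE x in M. 0 \<le> 1 + g x"
      "AE x in M. real_cond_exp M (F s) (\<lambda>x. (g x)\<^sup>2) x \<le> (\<delta> s t)\<^sup>2"
    and Q_eq: "Q = density (restr_to_subalg M (F t)) (\<lambda>x. ennreal (1 + g x))"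
    and agrees: "\<forall>A\<in>sets (F s). emeasure Q A = emeasure M A"
    unfolding Qcls_def by blast
  have "integrable M g"
    using square_integrable_imp_integrable[OF measurable_from_subalg[OF t g(1)] g(2)] .
  then have "AE x in M. real_cond_exp M (F s) g x = 0"
    using density_agrees_iff_real_cond_exp_zero[OF s t st g(1) _ g(3)] agrees unfolding Q_eq by blast
  with g Q_eq show "\<exists>g. density_perturbation M (F s) (F t) ((\<delta> s t)\<^sup>2) g \<and>
      Q = density (restr_to_subalg M (F t)) (\<lambda>x. ennreal (1 + g x))"
    unfolding density_perturbation_def by blast
qed (use density_in_Qcls[OF assms] in blast)

context prob_space
begin

lemma real_cond_exp_sq_product_perturbation_le:
  fixes g h :: "'a \<Rightarrow> real"
  assumes r: "subalgebra M Fr" and s: "subalgebra M Fs" and t: "subalgebra M Ft"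
    and rs: "sets Fr \<subseteq> sets Fs" and b: "0 \<le> b"
    and g: "density_perturbation M Fr Fs a g" and h: "density_perturbation M Fs Ft b h"
    and k2: "integrable M (\<lambda>x. (g x + h x + g x * h x)\<^sup>2)"
    and gh: "integrable M (\<lambda>x. (g x)\<^sup>2 * (h x)\<^sup>2)"
  shows "AE x in M. real_cond_exp M Fr (\<lambda>x. (g x + h x + g x * h x)\<^sup>2) x \<le> (1 + b) * a + b"
proof -
  interpret R: finite_measure_subalgebra M Fr by unfold_locales (fact r)
  interpret S: finite_measure_subalgebra M Fs by unfold_locales (fact s)
  have gs [measurable]: "g \<in> borel_measurable Fs" and ht [measurable]: "h \<in> borel_measurable Ft"
    and g2: "integrable M (\<lambda>x. (g x)\<^sup>2)" and h2: "integrable M (\<lambda>x. (h x)\<^sup>2)"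
    and g_centred: "AE x in M. real_cond_exp M Fr g x = 0"
    and g_var: "AE x in M. real_cond_exp M Fr (\<lambda>x. (g x)\<^sup>2) x \<le> a"
    and h_centred: "AE x in M. real_cond_exp M Fs h x = 0"
    and h_var: "AE x in M. real_cond_exp M Fs (\<lambda>x. (h x)\<^sup>2) x \<le> b"
    using g h by (simp_all add: density_perturbation_def)
  have [measurable]: "g \<in> borel_measurable M" and hM [measurable]: "h \<in> borel_measurable M"
    using measurable_from_subalg[OF s gs] measurable_from_subalg[OF t ht] .
  have g1: "integrable M g" and h1: "integrable M h"
    using g2 h2 by (auto intro: square_integrable_imp_integrable)
  let ?k2 = "\<lambda>x. (g x + h x + g x * h x)\<^sup>2"
  let ?u = "\<lambda>x. (1 + b) * (g x)\<^sup>2 + 2 * b * g x + b"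
  have "AE x in M. real_cond_exp M Fs ?k2 x \<le> ?u x"
    using S.real_cond_exp_product_perturbation(2)[OF gs g1 g2 hM h1 h2 h_centred gh] h_var
  proof eventually_elim
    case (elim x)
    then have "real_cond_exp M Fs ?k2 x \<le> (g x)\<^sup>2 + (1 + g x)\<^sup>2 * b"
      by (simp add: mult_left_mono)
    also have "\<dots> = ?u x" by (simp add: power2_eq_square algebra_simps)
    finally show ?case .
  qed
  then have "AE x in M. real_cond_exp M Fr (real_cond_exp M Fs ?k2) x \<le> real_cond_exp M Fr ?u x"
    using g1 g2 by (intro R.real_cond_exp_mono S.real_cond_exp_int(1) k2) auto
  moreover have "AE x in M. real_cond_exp M Fr (real_cond_exp M Fs ?k2) x = real_cond_exp M Fr ?k2 x"
    using subalgebra_mono[OF r s rs] s k2 by (intro R.real_cond_exp_nested_subalg)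
  ultimately show ?thesis
    using R.real_cond_exp_quadratic[OF g1 g2, of "1 + b" "2 * b" b] g_centred g_var
  proof eventually_elim
    case (elim x)
    have "(1 + b) * real_cond_exp M Fr (\<lambda>x. (g x)\<^sup>2) x \<le> (1 + b) * a"
      using elim(5) b by (intro mult_left_mono) auto
    with elim(1-4) show ?case by simp
  qed
qed

lemma density_perturbation_mult:
  fixes g h :: "'a \<Rightarrow> real"
  assumes r: "subalgebra M Fr" and s: "subalgebra M Fs" and t: "subalgebra M Ft"
    and rs: "sets Fr \<subseteq> sets Fs" and st: "sets Fs \<subseteq> sets Ft" and b: "0 \<le> b"
    and g: "density_perturbation M Fr Fs a g" and h: "density_perturbation M Fs Ft b h"
  shows "density_perturbation M Fr Ft ((1 + b) * a + b) (\<lambda>x. g x + h x + g x * h x)"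
proof -
  interpret R: finite_measure_subalgebra M Fr by unfold_locales (fact r)
  interpret S: finite_measure_subalgebra M Fs by unfold_locales (fact s)
  have gs [measurable]: "g \<in> borel_measurable Fs" and ht [measurable]: "h \<in> borel_measurable Ft"
    and g2: "integrable M (\<lambda>x. (g x)\<^sup>2)" and h2: "integrable M (\<lambda>x. (h x)\<^sup>2)"
    and g_nonneg: "AE x in M. 0 \<le> 1 + g x" and h_nonneg: "AE x in M. 0 \<le> 1 + h x"
    and g_centred: "AE x in M. real_cond_exp M Fr g x = 0"
    and h_centred: "AE x in M. real_cond_exp M Fs h x = 0"
    and h_var: "AE x in M. real_cond_exp M Fs (\<lambda>x. (h x)\<^sup>2) x \<le> b"
    using g h by (simp_all add: density_perturbation_def)
  have [measurable]: "g \<in> borel_measurable Ft"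
    using measurable_from_subalg[OF subalgebra_mono[OF s t st] gs] .
  have gM [measurable]: "g \<in> borel_measurable M" and hM [measurable]: "h \<in> borel_measurable M"
    using measurable_from_subalg[OF s gs] measurable_from_subalg[OF t ht] .
  have g1: "integrable M g" and h1: "integrable M h"
    using g2 h2 by (auto intro: square_integrable_imp_integrable)
  have gh: "integrable M (\<lambda>x. (g x)\<^sup>2 * (h x)\<^sup>2)"
    using h_var by (intro S.integrable_mult_real_cond_exp_bounded g2 h2) auto
  have k2: "integrable M (\<lambda>x. (g x + h x + g x * h x)\<^sup>2)"
    by (rule square_integrable_product_perturbation) (use g2 h2 gh in auto)
  have "AE x in M. 0 \<le> (1 + g x) * (1 + h x)"
    using g_nonneg h_nonneg by eventually_elim simp
  then have nonneg: "AE x in M. 0 \<le> 1 + (g x + h x + g x * h x)"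
    by (simp add: algebra_simps)
  have "AE x in M. real_cond_exp M Fr (\<lambda>x. g x + h x + g x * h x) x
                   = real_cond_exp M Fr (real_cond_exp M Fs (\<lambda>x. g x + h x + g x * h x)) x"
    using subalgebra_mono[OF r s rs] s square_integrable_imp_integrable[OF _ k2]
    by (intro AE_symmetric[OF R.real_cond_exp_nested_subalg]) auto
  moreover have "AE x in M. real_cond_exp M Fr (real_cond_exp M Fs (\<lambda>x. g x + h x + g x * h x)) x
                   = real_cond_exp M Fr g x"
    using S.real_cond_exp_product_perturbation(1)[OF gs g1 g2 hM h1 h2 h_centred gh] h1
    by (intro R.real_cond_exp_cong) auto
  ultimately have centred: "AE x in M. real_cond_exp M Fr (\<lambda>x. g x + h x + g x * h x) x = 0"
    using g_centred by eventually_elim simp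
  show ?thesis
    unfolding density_perturbation_def
    using k2 nonneg centred
      real_cond_exp_sq_product_perturbation_le[OF r s t rs b g h k2 gh]
    by auto
qed

lemma density_perturbation_paste:
  fixes g1 g2 :: "'a \<Rightarrow> real"
  assumes s: "subalgebra M Fs" and t: "subalgebra M Ft" and st: "sets Fs \<subseteq> sets Ft"
    and A: "A \<in> sets Fs"
    and g1: "density_perturbation M Fs Ft c g1" and g2: "density_perturbation M Fs Ft c g2"
  shows "density_perturbation M Fs Ft c (\<lambda>x. indicator A x * g1 x + indicator (space M - A) x * g2 x)"
proof -
  interpret S: finite_measure_subalgebra M Fs by unfold_locales (fact s)
  let ?g = "\<lambda>x. indicator A x * g1 x + indicator (space M - A) x * g2 x"
  have "space Fs = space M" using s by (simp add: subalgebra_def)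
  then have [measurable]: "A \<in> sets Ft" "space M - A \<in> sets Ft"
    using A st by (auto dest: sets.compl_sets)
  then have AM: "A \<in> sets M" "space M - A \<in> sets M" using t by (auto simp: subalgebra_def)
  have [measurable]: "g1 \<in> borel_measurable Ft" "g2 \<in> borel_measurable Ft"
    and sq1: "integrable M (\<lambda>x. (g1 x)\<^sup>2)" and sq2: "integrable M (\<lambda>x. (g2 x)\<^sup>2)"
    and nonneg: "AE x in M. 0 \<le> 1 + g1 x" "AE x in M. 0 \<le> 1 + g2 x"
    and centred: "AE x in M. real_cond_exp M Fs g1 x = 0" "AE x in M. real_cond_exp M Fs g2 x = 0"
    and var: "AE x in M. real_cond_exp M Fs (\<lambda>x. (g1 x)\<^sup>2) x \<le> c"
      "AE x in M. real_cond_exp M Fs (\<lambda>x. (g2 x)\<^sup>2) x \<le> c"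
    using g1 g2 by (simp_all add: density_perturbation_def)
  have [measurable]: "g1 \<in> borel_measurable M" "g2 \<in> borel_measurable M"
    by (auto intro: measurable_from_subalg[OF t])
  have i1: "integrable M g1" and i2: "integrable M g2"
    using sq1 sq2 by (auto intro: square_integrable_imp_integrable)
  have "A \<subseteq> space M" using AM(1) by (rule sets.sets_into_space)
  then have sq: "(\<lambda>x. (?g x)\<^sup>2) = (\<lambda>x. indicator A x * (g1 x)\<^sup>2 + indicator (space M - A) x * (g2 x)\<^sup>2)"
    by (auto simp: indicator_def)
  have "integrable M (\<lambda>x. (?g x)\<^sup>2)"
    unfolding sq using integrable_mult_indicator[OF AM(1) sq1] integrable_mult_indicator[OF AM(2) sq2]
    by (intro Bochner_Integration.integrable_add) auto
  moreover have "AE x in M. 0 \<le> 1 + ?g x"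
    using nonneg by eventually_elim (auto simp: indicator_def)
  moreover have "AE x in M. real_cond_exp M Fs ?g x = 0"
    using S.real_cond_exp_paste[OF A i1 i2] centred
    by eventually_elim auto
  moreover have "AE x in M. real_cond_exp M Fs (\<lambda>x. (?g x)\<^sup>2) x \<le> c"
    unfolding sq using S.real_cond_exp_paste[OF A sq1 sq2] var AE_space
    by eventually_elim (auto simp: indicator_def)
  ultimately show ?thesis
    unfolding density_perturbation_def by auto
qed

end

lemma Qcls_mult:
  assumes P: "prob_space M"
    and r: "subalgebra M (F r)" and s: "subalgebra M (F s)" and t: "subalgebra M (F t)"
    and rs: "sets (F r) \<subseteq> sets (F s)" and st: "sets (F s) \<subseteq> sets (F t)"
    and \<delta>: "0 \<le> \<delta> r s" "0 \<le> \<delta> s t" "\<delta> r s * \<delta> s t + \<delta> r s + \<delta> s t = \<delta> r t"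
    and Q: "Q \<in> Qcls M F \<delta> r s" and R: "R \<in> Qcls M F \<delta> s t"
  shows "density (restr_to_subalg M (F t))
           (\<lambda>x. RN_deriv (restr_to_subalg M (F s)) Q x * RN_deriv (restr_to_subalg M (F t)) R x)
         \<in> Qcls M F \<delta> r t"
proof -
  obtain g where g: "density_perturbation M (F r) (F s) ((\<delta> r s)\<^sup>2) g"
    and Q_eq: "Q = density (restr_to_subalg M (F s)) (\<lambda>x. ennreal (1 + g x))"
    using Q Qcls_iff[OF P r s rs] by blast
  obtain h where h: "density_perturbation M (F s) (F t) ((\<delta> s t)\<^sup>2) h"
    and R_eq: "R = density (restr_to_subalg M (F t)) (\<lambda>x. ennreal (1 + h x))"
    using R Qcls_iff[OF P s t st] by blast
  have "(1 + (\<delta> s t)\<^sup>2) * (\<delta> r s)\<^sup>2 + (\<delta> s t)\<^sup>2 \<le> (\<delta> r s * \<delta> s t + \<delta> r s + \<delta> s t)\<^sup>2"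
    by (rule product_sum_sq_bound[OF \<delta>(1,2)])
  also have "\<dots> = (\<delta> r t)\<^sup>2" by (simp only: \<delta>(3))
  finally have "density_perturbation M (F r) (F t) ((\<delta> r t)\<^sup>2) (\<lambda>x. g x + h x + g x * h x)"
    by (rule density_perturbation_mono[OF prob_space.density_perturbation_mult[OF P r s t rs st
          zero_le_power2 g h]])
  moreover have "density (restr_to_subalg M (F t))
           (\<lambda>x. RN_deriv (restr_to_subalg M (F s)) Q x * RN_deriv (restr_to_subalg M (F t)) R x)
        = density (restr_to_subalg M (F t)) (\<lambda>x. ennreal (1 + (g x + h x + g x * h x)))"
    unfolding Q_eq R_eq using g h
    by (intro prob_space.density_RN_deriv_mult[OF P s t st]) (simp_all add: density_perturbation_def)
  ultimately show ?thesis
    unfolding Qcls_iff[OF P r t subset_trans[OF rs st]] by blast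
qed

lemma Qcls_paste:
  assumes P: "prob_space M" and s: "subalgebra M (F s)" and t: "subalgebra M (F t)"
    and st: "sets (F s) \<subseteq> sets (F t)" and A: "A \<in> sets (F s)"
    and Q1: "Q1 \<in> Qcls M F \<delta> s t" and Q2: "Q2 \<in> Qcls M F \<delta> s t"
  shows "density (restr_to_subalg M (F t))
           (\<lambda>x. RN_deriv (restr_to_subalg M (F t)) Q1 x * indicator A x
              + RN_deriv (restr_to_subalg M (F t)) Q2 x * indicator (space M - A) x)
         \<in> Qcls M F \<delta> s t"
proof -
  obtain g1 where g1: "density_perturbation M (F s) (F t) ((\<delta> s t)\<^sup>2) g1"
    and Q1_eq: "Q1 = density (restr_to_subalg M (F t)) (\<lambda>x. ennreal (1 + g1 x))"
    using Q1 Qcls_iff[OF P s t st] by blast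
  obtain g2 where g2: "density_perturbation M (F s) (F t) ((\<delta> s t)\<^sup>2) g2"
    and Q2_eq: "Q2 = density (restr_to_subalg M (F t)) (\<lambda>x. ennreal (1 + g2 x))"
    using Q2 Qcls_iff[OF P s t st] by blast
  have "density_perturbation M (F s) (F t) ((\<delta> s t)\<^sup>2)
          (\<lambda>x. indicator A x * g1 x + indicator (space M - A) x * g2 x)"
    by (rule prob_space.density_perturbation_paste[OF P s t st A g1 g2])
  moreover have "density (restr_to_subalg M (F t))
           (\<lambda>x. RN_deriv (restr_to_subalg M (F t)) Q1 x * indicator A x
              + RN_deriv (restr_to_subalg M (F t)) Q2 x * indicator (space M - A) x)
        = density (restr_to_subalg M (F t))
            (\<lambda>x. ennreal (1 + (indicator A x * g1 x + indicator (space M - A) x * g2 x)))"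
    unfolding Q1_eq Q2_eq using A st g1 g2
    by (intro prob_space.density_RN_deriv_paste[OF P t]) (auto simp: density_perturbation_def)
  ultimately show ?thesis
    unfolding Qcls_iff[OF P s t st] by blast
qed

theorem lemma6p6:
  fixes M :: "'a measure" and F :: "real \<Rightarrow> 'a measure" and T :: real
    and \<delta> :: "real \<Rightarrow> real \<Rightarrow> real"
  assumes "prob_space M"
    and "\<And>t. 0 \<le> t \<Longrightarrow> t \<le> T \<Longrightarrow> subalgebra M (F t)"
    and "\<And>s t. 0 \<le> s \<Longrightarrow> s \<le> t \<Longrightarrow> t \<le> T \<Longrightarrow> sets (F s) \<subseteq> sets (F t)"
    and "\<And>s t. 0 \<le> s \<Longrightarrow> s \<le> t \<Longrightarrow> t \<le> T \<Longrightarrow> 0 \<le> \<delta> s t"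
    and "\<And>r s t. 0 \<le> r \<Longrightarrow> r \<le> s \<Longrightarrow> s \<le> t \<Longrightarrow> t \<le> T \<Longrightarrow>
           \<delta> r s * \<delta> s t + \<delta> r s + \<delta> s t = \<delta> r t"
  shows "(\<forall>r s t Q R. 0 \<le> r \<and> r \<le> s \<and> s \<le> t \<and> t \<le> T \<and>
            Q \<in> Qcls M F \<delta> r s \<and> R \<in> Qcls M F \<delta> s t \<longrightarrow>
            density (restr_to_subalg M (F t))
              (\<lambda>x. RN_deriv (restr_to_subalg M (F s)) Q x * RN_deriv (restr_to_subalg M (F t)) R x)
            \<in> Qcls M F \<delta> r t)
       \<and> (\<forall>s t A Q1 Q2. 0 \<le> s \<and> s \<le> t \<and> t \<le> T \<and> A \<in> sets (F s) \<and>
            Q1 \<in> Qcls M F \<delta> s t \<and> Q2 \<in> Qcls M F \<delta> s t \<longrightarrow>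
            (\<exists>Q\<in>Qcls M F \<delta> s t.
               Q = density (restr_to_subalg M (F t))
                 (\<lambda>x. RN_deriv (restr_to_subalg M (F t)) Q1 x * indicator A x
                    + RN_deriv (restr_to_subalg M (F t)) Q2 x * indicator (space M - A) x)))"
proof (intro conjI allI impI)
  fix r s t Q R
  assume "0 \<le> r \<and> r \<le> s \<and> s \<le> t \<and> t \<le> T \<and> Q \<in> Qcls M F \<delta> r s \<and> R \<in> Qcls M F \<delta> s t"
  then show "density (restr_to_subalg M (F t))
              (\<lambda>x. RN_deriv (restr_to_subalg M (F s)) Q x * RN_deriv (restr_to_subalg M (F t)) R x)
            \<in> Qcls M F \<delta> r t"
    using assms by (intro Qcls_mult) auto
next
  fix s t A Q1 Q2
  assume "0 \<le> s \<and> s \<le> t \<and> t \<le> T \<and> A \<in> sets (F s) \<and>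
            Q1 \<in> Qcls M F \<delta> s t \<and> Q2 \<in> Qcls M F \<delta> s t"
  then show "\<exists>Q\<in>Qcls M F \<delta> s t.
               Q = density (restr_to_subalg M (F t))
                 (\<lambda>x. RN_deriv (restr_to_subalg M (F t)) Q1 x * indicator A x
                    + RN_deriv (restr_to_subalg M (F t)) Q2 x * indicator (space M - A) x)"
    using assms by (auto intro!: Qcls_paste)
qed

end
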